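(* Let $\phi_i:\mathbb{R}\to\mathbb{R}$ be twice differentiable, let $x_i\in\mathbb{R}^d\setminus\{0\}$, $y_i\in\mathbb{R}$, and let $f_i(w)=\phi_i(x_i^\top w-y_i)$, assumed non-negative for all $w\in\mathbb{R}^d$. Fix $w^t\in\mathbb{R}^d$ and write $f_i:=f_i(w^t)$, $a_i:=\phi_i'(x_i^\top w^t-y_i)$, $h_i:=\phi_i''(x_i^\top w^t-y_i)$, so that $\nabla f_i(w^t)=a_ix_i$ and $\nabla^2 f_i(w^t)=h_ix_ix_i^\top$. Consider the projection problem $$\min_{w\in\mathbb{R}^d}\ \tfrac12\|w-w^t\|^2\quad\text{s.t.}\quad f_i(w^t)+\langle \nabla f_i(w^t),w-w^t\rangle+\tfrac12\langle \nabla^2 f_i(w^t)(w-w^t),w-w^t\rangle=0 .$$ (i) If $a_i^2-2h_if_i\ge 0$ (and $h_i\neq 0$, $a_i\neq 0$, so that the following expression is defined), then an optimal solution of this problem is $$w^{t+1}=w^t-\frac{a_i}{h_i}\left(1-\frac{\sqrt{a_i^2-2h_if_i}}{|a_i|}\right)\frac{x_i}{\|x_i\|^2}.$$ (ii) If $a_i^2-2h_if_i<0$, then necessarily $h_i>0$, and the point $$w^{t+1}=w^t-\frac{a_i}{h_i}\frac{x_i}{\|x_i\|^2}$$ is a minimizer over $w\in\mathbb{R}^d$ of the local quadratic $f_i(w^t)+\langle \nabla f_i(w^t),w-w^t\rangle+\tfrac12\langle \nabla^2 f_i(w^t)(w-w^t),w-w^t\rangle$.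
   Context: This is the "SP2" step for generalized linear models: projecting $w^t$ onto the zero set of the second-order Taylor expansion of $f_i$ at $w^t$. *)

theory Defs
  imports "HOL-Analysis.Analysis"
begin

text \<open>Second-order Taylor model of f(w) = phi(x.w - y) at wt, written with
  f = f(wt), gradient a*x and Hessian h*x*x^T:
  f + <a x, w - wt> + 1/2 <h x x^T (w - wt), w - wt>.\<close>
definition taylor2 :: "real \<Rightarrow> real \<Rightarrow> real \<Rightarrow> 'a::euclidean_space \<Rightarrow> 'a \<Rightarrow> 'a \<Rightarrow> real" where
  "taylor2 f a h x wt w =
     f + inner (a *\<^sub>R x) (w - wt) + (1/2) * inner ((h * inner x (w - wt)) *\<^sub>R x) (w - wt)"

end

theory Submission
  imports Defs "HOL-Library.Quadratic_Discriminant"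
begin

text \<open>The Taylor model depends on \<open>w\<close> only through \<open>s = \<langle>x, w - wt\<rangle>\<close>, as the scalar
  quadratic \<open>f + a s + h/2 s\<^sup>2\<close>. By Cauchy-Schwarz the point closest to \<open>wt\<close> with a
  prescribed value of \<open>s\<close> is \<open>wt + (s / \<parallel>x\<parallel>\<^sup>2) x\<close>, at distance \<open>|s| / \<parallel>x\<parallel>\<close>. Part (i) thus
  amounts to picking the root \<open>(sgn a \<cdot> \<surd>(a\<^sup>2 - 2hf) - a) / h\<close> of smallest modulus of the scalar
  quadratic, and part (ii) to minimising it at its vertex \<open>-a/h\<close>; the quadratic is convex
  there because \<open>2 h f > a\<^sup>2 \<ge> 0\<close> together with \<open>f \<ge> 0\<close> forces \<open>h > 0\<close>.\<close>

lemma taylor2_eq_scalar_quadratic: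
  "taylor2 f a h x wt w = f + a * inner x (w - wt) + h / 2 * (inner x (w - wt))\<^sup>2"
  unfolding taylor2_def by (simp add: power2_eq_square algebra_simps)

lemma inner_step_along:
  fixes x wt :: "'a::real_inner"
  assumes "x \<noteq> 0"
  shows "inner x (wt - (c / (norm x)\<^sup>2) *\<^sub>R x - wt) = - c"
  using assms by (simp add: power2_norm_eq_inner)

lemma norm_step_along:
  fixes x wt :: "'a::real_normed_vector"
  assumes "x \<noteq> 0"
  shows "norm (wt - (c / (norm x)\<^sup>2) *\<^sub>R x - wt) = \<bar>c\<bar> / norm x"
  using assms by (simp add: power2_eq_square)

lemma scalar_quadratic_eq_0_iff:
  fixes f a h s :: real
  assumes "h \<noteq> 0" "a\<^sup>2 - 2 * h * f \<ge> 0"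
  shows "f + a * s + h / 2 * s\<^sup>2 = 0 \<longleftrightarrow>
    h * s + a = sqrt (a\<^sup>2 - 2 * h * f) \<or> h * s + a = - sqrt (a\<^sup>2 - 2 * h * f)"
proof -
  have "f + a * s + h / 2 * s\<^sup>2 = 0 \<longleftrightarrow> (h * s + a)\<^sup>2 = a\<^sup>2 - 2 * h * f"
    using complete_square[of "h / 2" s a f] assms(1) by (simp add: discrim_def algebra_simps)
  then show ?thesis
    using plus_or_minus_sqrt[OF assms(2)] by simp
qed

lemma scalar_quadratic_min_modulus_root:
  fixes f a h :: real
  assumes D: "a\<^sup>2 - 2 * h * f \<ge> 0" and h: "h \<noteq> 0" and a: "a \<noteq> 0"
  defines "s0 \<equiv> - ((a / h) * (1 - sqrt (a\<^sup>2 - 2 * h * f) / \<bar>a\<bar>))"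
  shows "f + a * s0 + h / 2 * s0\<^sup>2 = 0"
    and "f + a * s + h / 2 * s\<^sup>2 = 0 \<Longrightarrow> \<bar>s0\<bar> \<le> \<bar>s\<bar>"
proof -
  define r where "r = sqrt (a\<^sup>2 - 2 * h * f)"
  have "r \<ge> 0" using D by (simp add: r_def)
  have hs0: "h * s0 + a = sgn a * r"
    using a h by (cases "a > 0") (auto simp: s0_def r_def field_simps)
  then show "f + a * s0 + h / 2 * s0\<^sup>2 = 0"
    using scalar_quadratic_eq_0_iff[OF h D] a by (cases "a > 0") (simp_all add: r_def)
  assume "f + a * s + h / 2 * s\<^sup>2 = 0"
  then have "h * s + a = r \<or> h * s + a = - r"
    using scalar_quadratic_eq_0_iff[OF h D] by (simp add: r_def)
  then have "\<bar>h * s0\<bar> \<le> \<bar>h * s\<bar>"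
    using hs0 \<open>r \<ge> 0\<close> a by (cases "a > 0") (auto simp: abs_if)
  then show "\<bar>s0\<bar> \<le> \<bar>s\<bar>"
    using h by (simp add: abs_mult)
qed

lemma scalar_quadratic_pos_leading_coeff:
  fixes f a h :: real
  assumes "f \<ge> 0" "a\<^sup>2 - 2 * h * f < 0"
  shows "h > 0"
proof -
  have "h * f > 0" using assms(2) zero_le_power2[of a] by linarith
  then show ?thesis using assms(1) by (simp add: zero_less_mult_iff)
qed

lemma scalar_quadratic_vertex_le:
  fixes f a h s :: real
  assumes "h > 0"
  shows "f + a * (- (a / h)) + h / 2 * (- (a / h))\<^sup>2 \<le> f + a * s + h / 2 * s\<^sup>2"
proof -
  have "f + a * s + h / 2 * s\<^sup>2 - (f + a * (- (a / h)) + h / 2 * (- (a / h))\<^sup>2)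
      = h / 2 * (s + a / h)\<^sup>2"
    using assms by (simp add: field_simps power2_eq_square)
  moreover have "h / 2 * (s + a / h)\<^sup>2 \<ge> 0" using assms by simp
  ultimately show ?thesis by linarith
qed

lemma taylor2_min_norm_root:
  fixes x wt w :: "'a::euclidean_space"
  assumes x: "x \<noteq> 0" and D: "a\<^sup>2 - 2 * h * f \<ge> 0" and h: "h \<noteq> 0" and a: "a \<noteq> 0"
  defines "c \<equiv> (a / h) * (1 - sqrt (a\<^sup>2 - 2 * h * f) / \<bar>a\<bar>)"
  defines "w1 \<equiv> wt - (c / (norm x)\<^sup>2) *\<^sub>R x"
  shows "taylor2 f a h x wt w1 = 0"
    and "taylor2 f a h x wt w = 0 \<Longrightarrow> norm (w1 - wt) \<le> norm (w - wt)"
proof -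
  note s0 = scalar_quadratic_min_modulus_root[OF D h a, folded c_def]
  show "taylor2 f a h x wt w1 = 0"
    using s0(1) unfolding w1_def taylor2_eq_scalar_quadratic inner_step_along[OF x] .
  assume "taylor2 f a h x wt w = 0"
  then have "\<bar>c\<bar> \<le> \<bar>inner x (w - wt)\<bar>"
    using s0(2) by (simp add: taylor2_eq_scalar_quadratic)
  also have "\<dots> \<le> norm (w - wt) * norm x"
    using Cauchy_Schwarz_ineq2 by (simp add: mult.commute)
  finally show "norm (w1 - wt) \<le> norm (w - wt)"
    using x unfolding w1_def norm_step_along[OF x] by (simp add: pos_divide_le_eq)
qed

lemma taylor2_vertex_minimal:
  fixes x wt w :: "'a::euclidean_space"
  assumes "x \<noteq> 0" "h > 0"
  shows "taylor2 f a h x wt (wt - ((a / h) / (norm x)\<^sup>2) *\<^sub>R x) \<le> taylor2 f a h x wt w"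
  unfolding taylor2_eq_scalar_quadratic inner_step_along[OF assms(1)]
  by (rule scalar_quadratic_vertex_le[OF assms(2)])

theorem lemma1:
  fixes phi phi' phi'' :: "real \<Rightarrow> real"
    and x wt :: "'a::euclidean_space" and y :: real
  assumes d1: "\<And>t. (phi has_real_derivative phi' t) (at t)"
    and d2: "\<And>t. (phi' has_real_derivative phi'' t) (at t)"
    and xnz: "x \<noteq> 0"
    and nonneg: "\<And>w. phi (inner x w - y) \<ge> 0"
  shows "let fi = phi (inner x wt - y); a = phi' (inner x wt - y); h = phi'' (inner x wt - y);
             q = taylor2 fi a h x wt
         in (a\<^sup>2 - 2 * h * fi \<ge> 0 \<and> h \<noteq> 0 \<and> a \<noteq> 0 \<longrightarrow>
               (let w1 = wt - ((a / h) * (1 - sqrt (a\<^sup>2 - 2 * h * fi) / \<bar>a\<bar>) / (norm x)\<^sup>2) *\<^sub>R x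
                in q w1 = 0 \<and> (\<forall>w. q w = 0 \<longrightarrow> (1/2) * (norm (w1 - wt))\<^sup>2 \<le> (1/2) * (norm (w - wt))\<^sup>2)))
          \<and> (a\<^sup>2 - 2 * h * fi < 0 \<longrightarrow>
               h > 0 \<and>
               (let w1 = wt - ((a / h) / (norm x)\<^sup>2) *\<^sub>R x
                in \<forall>w. q w1 \<le> q w))"
  \<comment> \<open>\<open>d1\<close> and \<open>d2\<close> only give \<open>a\<close> and \<open>h\<close> their meaning as derivatives; the claims concern the model alone.\<close>
  using taylor2_min_norm_root[OF xnz] taylor2_vertex_minimal[OF xnz]
    scalar_quadratic_pos_leading_coeff[OF nonneg]
  by (simp add: Let_def power_mono)

end
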